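(* There is an absolutely continuous function $f:[0,1]\to\mathbb{R}$ whose graph $G_f=\{(x,f(x)):x\in[0,1]\}$ is strongly porous, but every monotone subset of $G_f$ is nowhere dense in $G_f$. In particular, $G_f$ is not $\sigma$-monotone.
   Context: A set $X\subseteq\mathbb{R}^2$ is strongly porous if there is $p>0$ such that for every $x\in\mathbb{R}^2$ and every $r\in(0,\operatorname{diam}X)$ there is $y\in\mathbb{R}^2$ with $B(y,pr)\subseteq B(x,r)\setminus X$ (Euclidean balls). A metric space $(X,d)$ is monotone if there are a linear order $<$ on $X$ and $c>0$ with $d(x,y)\le c\,d(x,z)$ whenever $x<y<z$; it is $\sigma$-monotone if it is a countable union of monotone subspaces. *)

theory Defs
  imports "HOL-Analysis.Analysis"
begin

definition abs_continuous_on :: "real \<Rightarrow> real \<Rightarrow> (real \<Rightarrow> real) \<Rightarrow> bool" where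
  "abs_continuous_on a b f \<longleftrightarrow>
     (\<forall>\<epsilon>>0. \<exists>\<delta>>0. \<forall>(n::nat) (l::nat \<Rightarrow> real) (u::nat \<Rightarrow> real).
        (\<forall>k<n. a \<le> l k \<and> l k \<le> u k \<and> u k \<le> b) \<and>
        (\<forall>i<n. \<forall>j<n. i \<noteq> j \<longrightarrow> u i \<le> l j \<or> u j \<le> l i) \<and>
        (\<Sum>k<n. u k - l k) < \<delta>
        \<longrightarrow> (\<Sum>k<n. \<bar>f (u k) - f (l k)\<bar>) < \<epsilon>)"

definition strongly_porous :: "(real \<times> real) set \<Rightarrow> bool" where
  "strongly_porous X \<longleftrightarrow>
     (\<exists>p>0. \<forall>x. \<forall>r. 0 < r \<and> r < diameter X \<longrightarrow> (\<exists>y. ball y (p * r) \<subseteq> ball x r - X))"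

definition monotone_space :: "'a::metric_space set \<Rightarrow> bool" where
  "monotone_space A \<longleftrightarrow>
     (\<exists>R c. linear_order_on A R \<and> c > 0 \<and>
        (\<forall>x\<in>A. \<forall>y\<in>A. \<forall>z\<in>A. (x, y) \<in> R \<and> x \<noteq> y \<and> (y, z) \<in> R \<and> y \<noteq> z
            \<longrightarrow> dist x y \<le> c * dist x z))"

definition sigma_monotone :: "'a::metric_space set \<Rightarrow> bool" where
  "sigma_monotone X \<longleftrightarrow> (\<exists>M :: nat \<Rightarrow> 'a set. (\<forall>n. monotone_space (M n)) \<and> X = (\<Union>n. M n))"

definition nowhere_dense_in :: "'a::metric_space set \<Rightarrow> 'a set \<Rightarrow> bool" where
  "nowhere_dense_in A X \<longleftrightarrow>
     (subtopology euclidean X) interior_of ((subtopology euclidean X) closure_of A) = {}"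

definition graph_on :: "real set \<Rightarrow> (real \<Rightarrow> real) \<Rightarrow> (real \<times> real) set" where
  "graph_on S f = (\<lambda>x. (x, f x)) ` S"

end

theory Submission
  imports Defs
begin

text \<open>The function is a sum of layers of narrow tents. Layer \<open>k\<close> has one tooth of height
  \<open>L ^ 4\<close> and half-width \<open>L ^ 16\<close> in the middle of each cell of the grid of mesh \<open>L = period k\<close>,
  and the next mesh is \<open>L ^ 64\<close>. Layer \<open>k\<close> has total variation about \<open>L ^ 3\<close>, so the series converges
  in variation and the sum is absolutely continuous.

  Porosity: a window of length \<open>\<ell>\<close> meets at most five kinks of the layers whose mesh is at least
  \<open>8 \<ell>\<close>; on a sixth of the window avoiding them these layers are affine and the remaining ones are
  negligible, so the graph is nearly a segment there and misses a ball of radius \<open>\<ell> / 384\<close> above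
  or below it.

  Monotone subsets are nowhere dense: otherwise their closure contains an arc of the graph, hence
  three consecutive peaks of a fine layer. The middle peak is far from everything outside its foot,
  whose endpoints are close, so each two of the three peaks are joined by a chain of small steps
  in the arc avoiding the third. Points of the monotone set near the peaks are linearly ordered,
  one lies between the other two, and monotonicity forbids it to be avoided by such a chain.
  Baire's theorem then excludes \<open>\<sigma>\<close>-monotonicity.\<close>

section \<open>The construction\<close>

definition scale :: "nat \<Rightarrow> real" where
  "scale n = 1 / 2 ^ (16 * 4 ^ n)"

definition period :: "nat \<Rightarrow> real" where "period k = scale (3 * k)"
definition height :: "nat \<Rightarrow> real" where "height k = scale (3 * k + 1)"
definition halfwidth :: "nat \<Rightarrow> real" where "halfwidth k = scale (3 * k + 2)"
definition teeth :: "nat \<Rightarrow> nat" where "teeth k = 2 ^ (16 * 4 ^ (3 * k))"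
definition centre :: "nat \<Rightarrow> nat \<Rightarrow> real" where "centre k m = (real m + 1 / 2) * period k"

definition tent :: "real \<Rightarrow> real \<Rightarrow> real \<Rightarrow> real \<Rightarrow> real" where
  "tent c e M x = M * max 0 (e - \<bar>x - c\<bar>)"

text \<open>A tent of slope \<open>M\<close> and half-width \<open>e\<close> has peak \<open>M * e\<close>, so the teeth of layer \<open>k\<close> have
  height \<open>height k\<close>.\<close>
definition layer :: "nat \<Rightarrow> real \<Rightarrow> real" where
  "layer k x = (\<Sum>m<teeth k. tent (centre k m) (halfwidth k) (height k / halfwidth k) x)"

definition spike_sum :: "real \<Rightarrow> real" where
  "spike_sum x = (\<Sum>k. layer k x)"

definition spike_tail :: "nat \<Rightarrow> real \<Rightarrow> real" where
  "spike_tail K x = (\<Sum>j. layer (j + K) x)"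

lemma scale_pos: "0 < scale n"
  by (simp add: scale_def)

lemma scale_Suc: "scale (Suc n) = scale n ^ 4"
proof -
  have "(16::nat) * 4 ^ Suc n = 16 * 4 ^ n * 4" by simp
  then show ?thesis by (simp only: scale_def power_mult power_one_over)
qed

lemma scale_le: "scale n \<le> 1 / 65536"
proof (induction n)
  case 0
  then show ?case by (simp add: scale_def)
next
  case (Suc n)
  have "scale n ^ 4 \<le> scale n ^ 1"
    using scale_pos[of n] Suc by (intro power_decreasing) auto
  then show ?case using Suc by (simp add: scale_Suc)
qed

lemma scale_Suc_le: "scale (Suc n) \<le> scale n / 2 ^ 48"
proof -
  have q: "0 < scale n" "scale n \<le> 1 / 65536" by (rule scale_pos, rule scale_le)
  have "scale n ^ 3 \<le> (1 / 65536) ^ 3" using q by (intro power_mono) auto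
  then have "scale n * scale n ^ 3 \<le> scale n * (1 / 65536) ^ 3"
    using q by (intro mult_left_mono) auto
  then show ?thesis by (simp add: scale_Suc power_divide eval_nat_numeral)
qed

lemma scale_antimono: "m \<le> n \<Longrightarrow> scale n \<le> scale m"
proof (induction n)
  case (Suc n)
  then show ?case using scale_Suc_le[of n] scale_pos[of n] by (cases "m = Suc n") auto
qed simp

lemma scale_ratio:
  assumes "m \<le> n"
  shows "scale m = 2 ^ (16 * 4 ^ n - 16 * 4 ^ m) * scale n"
proof -
  have "(16::nat) * 4 ^ m \<le> 16 * 4 ^ n" using assms by (simp add: power_increasing)
  then have "(2::real) ^ (16 * 4 ^ n) = 2 ^ (16 * 4 ^ n - 16 * 4 ^ m) * 2 ^ (16 * 4 ^ m)"
    by (simp flip: power_add)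
  then show ?thesis by (simp add: scale_def field_simps)
qed

lemma period_pos: "0 < period k" and height_pos: "0 < height k" and halfwidth_pos: "0 < halfwidth k"
  by (simp_all add: period_def height_def halfwidth_def scale_pos)

lemma period_le: "period k \<le> 1 / 65536"
  unfolding period_def by (rule scale_le)

lemma height_eq: "height k = period k ^ 4"
  by (simp add: height_def period_def scale_Suc[symmetric])

lemma halfwidth_eq: "halfwidth k = period k ^ 16"
proof -
  have "3 * k + 2 = Suc (Suc (3 * k))" by simp
  then show ?thesis by (simp add: halfwidth_def period_def scale_Suc flip: power_mult)
qed

lemma period_Suc: "period (Suc k) = period k ^ 64"
proof -
  have "3 * Suc k = Suc (Suc (Suc (3 * k)))" by simp
  then have "period (Suc k) = scale (Suc (Suc (Suc (3 * k))))" by (simp only: period_def)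
  then show ?thesis by (simp add: period_def scale_Suc flip: power_mult)
qed

lemma teeth_eq: "real (teeth k) = 1 / period k"
  by (simp add: teeth_def period_def scale_def)

lemma height_le: "height k \<le> period k / 2 ^ 48"
  unfolding period_def height_def using scale_Suc_le[of "3 * k"] by simp

lemma halfwidth_le: "halfwidth k \<le> period k / 16"
proof -
  have "halfwidth k \<le> height k" unfolding halfwidth_def height_def by (rule scale_antimono) simp
  moreover have "period k / 2 ^ 48 \<le> period k / 16"
    using period_pos[of k] by (intro divide_left_mono) auto
  ultimately show ?thesis using height_le[of k] by linarith
qed

lemma period_Suc_le: "period (Suc k) \<le> period k / 2"
proof -
  have "period k ^ 64 \<le> period k ^ 2"
    using period_pos[of k] period_le[of k] by (intro power_decreasing) auto
  moreover have "period k ^ 2 \<le> period k / 2"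
    using period_pos[of k] period_le[of k] by (simp add: power2_eq_square mult_left_mono)
  ultimately show ?thesis by (simp add: period_Suc)
qed

lemma height_Suc_le: "height (Suc k) \<le> height k / 2"
proof -
  have "period k ^ 256 \<le> period k ^ 5"
    using period_pos[of k] period_le[of k] by (intro power_decreasing) auto
  moreover have "period k ^ 5 \<le> period k ^ 4 / 2"
    using period_pos[of k] period_le[of k] by (simp add: eval_nat_numeral mult_left_mono)
  ultimately show ?thesis by (simp add: height_eq period_Suc flip: power_mult)
qed

lemma centre_dist: "m \<noteq> m' \<Longrightarrow> period k \<le> \<bar>centre k m - centre k m'\<bar>"
proof -
  assume "m \<noteq> m'"
  then have "1 \<le> \<bar>real m - real m'\<bar>" by linarith
  moreover have "centre k m - centre k m' = (real m - real m') * period k"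
    by (simp add: centre_def algebra_simps)
  ultimately show ?thesis using period_pos[of k] by (simp add: abs_mult)
qed

lemma tent_nonneg: "0 \<le> M \<Longrightarrow> 0 \<le> tent c e M x"
  by (simp add: tent_def)

lemma tent_le: "0 \<le> M \<Longrightarrow> 0 \<le> e \<Longrightarrow> tent c e M x \<le> M * e"
  by (simp add: tent_def mult_left_mono)

lemma tent_eq_0: "e \<le> \<bar>x - c\<bar> \<Longrightarrow> tent c e M x = 0"
  by (simp add: tent_def)

lemma tent_centre: "0 \<le> e \<Longrightarrow> tent c e M c = M * e"
  by (simp add: tent_def)

lemma tent_lipschitz:
  assumes "0 \<le> M"
  shows "\<bar>tent c e M x - tent c e M y\<bar> \<le> M * \<bar>x - y\<bar>"
proof -
  have "\<bar>max 0 (e - \<bar>x - c\<bar>) - max 0 (e - \<bar>y - c\<bar>)\<bar> \<le> \<bar>x - y\<bar>"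
    by (simp add: abs_if max_def)
  then show ?thesis
    using mult_left_mono[OF _ assms] by (simp add: tent_def abs_mult assms flip: right_diff_distrib)
qed

text \<open>The variation of a tent over \<open>[l, u]\<close> is controlled by the increment of the monotone
  map that clips its argument to the support \<open>[c - e, c + e]\<close>.\<close>
lemma tent_variation:
  assumes "0 \<le> M" "0 \<le> e" "l \<le> u"
  shows "\<bar>tent c e M u - tent c e M l\<bar>
           \<le> M * (max (c - e) (min u (c + e)) - max (c - e) (min l (c + e)))"
proof -
  define g where "g x = max (c - e) (min x (c + e))" for x
  have tent_g: "tent c e M x = M * (e - \<bar>g x - c\<bar>)" for x
    using assms(2) by (simp add: tent_def g_def max_def min_def abs_if)
  have "g l \<le> g u" using assms(3) by (simp add: g_def)
  then have "\<bar>(e - \<bar>g u - c\<bar>) - (e - \<bar>g l - c\<bar>)\<bar> \<le> g u - g l"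
    by (simp add: abs_if)
  then show ?thesis
    using mult_left_mono[OF _ assms(1)] unfolding g_def[symmetric]
    by (simp add: tent_g abs_mult assms(1) flip: right_diff_distrib)
qed

lemma sum_le_if_at_most_one_nonzero:
  assumes "finite S" "\<And>i. i \<in> S \<Longrightarrow> 0 \<le> g i \<and> g i \<le> B" "0 \<le> B"
    and "\<And>i j. i \<in> S \<Longrightarrow> j \<in> S \<Longrightarrow> i \<noteq> j \<Longrightarrow> g i = 0 \<or> g j = 0"
  shows "sum g S \<le> B"
proof (cases "\<exists>i\<in>S. g i \<noteq> 0")
  case True
  then obtain i where i: "i \<in> S" "g i \<noteq> 0" by blast
  have "sum g S = g i + sum g (S - {i})" using assms(1) i(1) by (simp add: sum.remove)
  also have "sum g (S - {i}) = 0" using assms(4)[OF i(1)] i(2) by (intro sum.neutral) auto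
  finally show ?thesis using assms(2)[OF i(1)] by simp
next
  case False
  then show ?thesis using assms by simp
qed

lemma slope_nonneg: "0 \<le> height k / halfwidth k"
  using height_pos halfwidth_pos by (simp add: less_imp_le)

lemma layer_nonneg: "0 \<le> layer k x"
  unfolding layer_def by (intro sum_nonneg tent_nonneg slope_nonneg)

lemma layer_le_height: "layer k x \<le> height k"
  unfolding layer_def
proof (rule sum_le_if_at_most_one_nonzero)
  fix i
  have "tent (centre k i) (halfwidth k) (height k / halfwidth k) x \<le> height k / halfwidth k * halfwidth k"
    using halfwidth_pos[of k] by (intro tent_le slope_nonneg) auto
  then show "0 \<le> tent (centre k i) (halfwidth k) (height k / halfwidth k) x \<and>
      tent (centre k i) (halfwidth k) (height k / halfwidth k) x \<le> height k"
    using halfwidth_pos[of k] by (simp add: tent_nonneg slope_nonneg)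
next
  fix i j :: nat
  assume "i \<noteq> j"
  show "tent (centre k i) (halfwidth k) (height k / halfwidth k) x = 0 \<or>
      tent (centre k j) (halfwidth k) (height k / halfwidth k) x = 0"
    using centre_dist[OF \<open>i \<noteq> j\<close>, of k] halfwidth_le[of k] period_pos[of k]
    by (auto simp: tent_def)
qed (use height_pos[of k] in auto)

lemma layer_lipschitz: "\<bar>layer k x - layer k y\<bar> \<le> \<bar>x - y\<bar> / period k ^ 13"
proof -
  let ?t = "\<lambda>m. tent (centre k m) (halfwidth k) (height k / halfwidth k)"
  have "\<bar>layer k x - layer k y\<bar> \<le> (\<Sum>m<teeth k. \<bar>?t m x - ?t m y\<bar>)"
    unfolding layer_def sum_subtractf[symmetric] by (rule sum_abs)
  also have "\<dots> \<le> (\<Sum>m<teeth k. height k / halfwidth k * \<bar>x - y\<bar>)"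
    by (intro sum_mono tent_lipschitz slope_nonneg)
  also have "\<dots> = \<bar>x - y\<bar> / period k ^ 13"
    using period_pos[of k] by (simp add: teeth_eq height_eq halfwidth_eq field_simps eval_nat_numeral)
  finally show ?thesis .
qed

lemma layer_near_centre:
  assumes "m < teeth k" "\<bar>x - centre k m\<bar> \<le> period k / 2"
  shows "layer k x = tent (centre k m) (halfwidth k) (height k / halfwidth k) x"
proof -
  have "tent (centre k m') (halfwidth k) (height k / halfwidth k) x = 0"
    if "m' \<noteq> m" for m'
  proof (rule tent_eq_0)
    have "\<bar>centre k m' - centre k m\<bar> \<le> \<bar>x - centre k m'\<bar> + \<bar>x - centre k m\<bar>" by arith
    then show "halfwidth k \<le> \<bar>x - centre k m'\<bar>"
      using centre_dist[OF that, of k] halfwidth_le[of k] assms(2) period_pos[of k] by linarith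
  qed
  then show ?thesis
    unfolding layer_def using assms(1) by (simp add: sum.remove sum.neutral)
qed

lemma layer_centre: "m < teeth k \<Longrightarrow> layer k (centre k m) = height k"
  using layer_near_centre[of m k "centre k m"] period_pos[of k] halfwidth_pos[of k]
  by (simp add: tent_centre)

lemma layer_off_centre:
  "m < teeth k \<Longrightarrow> halfwidth k \<le> \<bar>x - centre k m\<bar> \<Longrightarrow> \<bar>x - centre k m\<bar> \<le> period k / 2 \<Longrightarrow>
    layer k x = 0"
  using layer_near_centre[of m k x] by (simp add: tent_eq_0)

section \<open>Continuity and absolute continuity\<close>

lemma height_geometric: "height (j + K) \<le> height K * (1 / 2) ^ j"
proof (induction j)
  case (Suc j)
  then show ?case using height_Suc_le[of "j + K"] by simp
qed simp

lemma period_geometric: "period (j + K) \<le> period K * (1 / 2) ^ j"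
proof (induction j)
  case (Suc j)
  then show ?case using period_Suc_le[of "j + K"] by simp
qed simp

lemma summable_height_shift: "summable (\<lambda>j. height (j + K))"
proof (rule summable_comparison_test)
  show "\<exists>N. \<forall>j\<ge>N. norm (height (j + K)) \<le> height K * (1 / 2) ^ j"
    by (intro exI[of _ 0] allI impI) (simp add: abs_of_pos height_pos height_geometric)
qed (intro summable_mult summable_geometric; simp)

lemma suminf_height_shift_le: "(\<Sum>j. height (j + K)) \<le> 2 * height K"
proof -
  have "(\<Sum>j. height (j + K)) \<le> (\<Sum>j. height K * (1 / 2) ^ j)"
    by (intro suminf_le summable_height_shift height_geometric summable_mult summable_geometric) auto
  also have "\<dots> = 2 * height K"
    by (simp add: suminf_mult suminf_geometric)
  finally show ?thesis .
qed

lemma summable_layer_shift: "summable (\<lambda>j. layer (j + K) x)"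
proof (rule summable_comparison_test[OF _ summable_height_shift[of K]])
  show "\<exists>N. \<forall>j\<ge>N. norm (layer (j + K) x) \<le> height (j + K)"
    using layer_nonneg layer_le_height by (intro exI[of _ 0]) simp
qed

lemma spike_tail_nonneg: "0 \<le> spike_tail K x"
  unfolding spike_tail_def by (intro suminf_nonneg summable_layer_shift layer_nonneg)

lemma spike_tail_le: "spike_tail K x \<le> 2 * height K"
proof -
  have "spike_tail K x \<le> (\<Sum>j. height (j + K))"
    unfolding spike_tail_def by (intro suminf_le summable_layer_shift summable_height_shift layer_le_height)
  then show ?thesis using suminf_height_shift_le[of K] by linarith
qed

lemma spike_sum_split: "spike_sum x = (\<Sum>j<K. layer j x) + spike_tail K x"
  using suminf_split_initial_segment[OF summable_layer_shift[of 0 x], of K]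
  by (simp add: spike_sum_def spike_tail_def)

lemma spike_sum_split_Suc:
  "spike_sum x = (\<Sum>j<K. layer j x) + layer K x + spike_tail (Suc K) x"
  using spike_sum_split[of x "Suc K"] by simp

text \<open>The Lipschitz constants \<open>1 / period j ^ 13\<close> of the layers grow so fast that their sum
  below \<open>K\<close> is dominated by \<open>1 / period K = 1 / period (K - 1) ^ 64\<close>.\<close>
lemma sum_layer_lipschitz_le: "(\<Sum>j<K. 1 / period j ^ 13) \<le> 1 / period K"
proof (induction K)
  case 0
  then show ?case using period_pos[of 0] by simp
next
  case (Suc K)
  let ?q = "period K"
  have q: "0 < ?q" "?q \<le> 1 / 2" using period_pos[of K] period_le[of K] by auto
  have "1 / ?q \<le> 1 / ?q ^ 13"
    using q power_decreasing[of 1 13 ?q] by (intro divide_left_mono) auto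
  moreover have "2 * ?q ^ 64 \<le> ?q ^ 13"
  proof -
    have "?q ^ 51 \<le> ?q ^ 1" using q by (intro power_decreasing) auto
    then have "?q ^ 13 * ?q ^ 51 \<le> ?q ^ 13 * (1 / 2)"
      using q by (intro mult_left_mono) auto
    then show ?thesis by (simp flip: power_add)
  qed
  then have "2 / ?q ^ 13 \<le> 1 / ?q ^ 64"
    using q by (simp add: field_simps)
  ultimately show ?case using Suc by (simp add: period_Suc)
qed

lemma head_lipschitz:
  "\<bar>(\<Sum>j<K. layer j x) - (\<Sum>j<K. layer j y)\<bar> \<le> \<bar>x - y\<bar> / period K"
proof -
  have "\<bar>(\<Sum>j<K. layer j x) - (\<Sum>j<K. layer j y)\<bar> \<le> (\<Sum>j<K. \<bar>layer j x - layer j y\<bar>)"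
    unfolding sum_subtractf[symmetric] by (rule sum_abs)
  also have "\<dots> \<le> (\<Sum>j<K. \<bar>x - y\<bar> / period j ^ 13)"
    by (intro sum_mono layer_lipschitz)
  also have "\<dots> = \<bar>x - y\<bar> * (\<Sum>j<K. 1 / period j ^ 13)"
    by (simp add: sum_distrib_left)
  also have "\<dots> \<le> \<bar>x - y\<bar> * (1 / period K)"
    by (intro mult_left_mono sum_layer_lipschitz_le) auto
  finally show ?thesis by simp
qed

lemma spike_sum_modulus: "\<bar>spike_sum x - spike_sum y\<bar> \<le> \<bar>x - y\<bar> / period K + 2 * height K"
  using spike_sum_split[of x K] spike_sum_split[of y K] head_lipschitz[where K = K and x = x and y = y]
    spike_tail_nonneg[of K x] spike_tail_nonneg[of K y] spike_tail_le[of K x] spike_tail_le[of K y]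
  by linarith

lemma period_tendsto_0: "0 < \<epsilon> \<Longrightarrow> \<exists>K. period K < \<epsilon>"
proof -
  assume "0 < \<epsilon>"
  then obtain K where K: "(1 / 2 :: real) ^ K < \<epsilon>"
    using real_arch_pow_inv[of \<epsilon> "1 / 2"] by auto
  have "period 0 * (1 / 2) ^ K \<le> 1 * (1 / 2) ^ K"
    using period_le[of 0] by (intro mult_right_mono) auto
  then show ?thesis
    using period_geometric[of K 0, simplified] K by (intro exI[of _ K]) linarith
qed

lemma uniformly_continuous_spike_sum: "uniformly_continuous_on UNIV spike_sum"
  unfolding uniformly_continuous_on_def
proof (intro allI impI)
  fix \<epsilon> :: real
  assume "0 < \<epsilon>"
  then obtain K where K: "period K < \<epsilon> / 4" using period_tendsto_0[of "\<epsilon> / 4"] by auto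
  have hK: "height K \<le> period K" using height_le[of K] period_pos[of K] by simp
  have "\<bar>spike_sum x - spike_sum y\<bar> < \<epsilon>" if "\<bar>x - y\<bar> < \<epsilon> * period K / 4" for x y
  proof -
    have "\<bar>x - y\<bar> / period K < \<epsilon> / 4"
      using that period_pos[of K] by (simp add: field_simps)
    then show ?thesis using spike_sum_modulus[of x y K] K hK by linarith
  qed
  then show "\<exists>\<delta>>0. \<forall>x\<in>UNIV. \<forall>y\<in>UNIV. dist y x < \<delta> \<longrightarrow> dist (spike_sum y) (spike_sum x) < \<epsilon>"
    using \<open>0 < \<epsilon>\<close> period_pos[of K] by (auto simp: dist_real_def intro!: exI[of _ "\<epsilon> * period K / 4"])
qed

lemma sum_increments_le:
  fixes p :: "real \<Rightarrow> real" and l u :: "'i \<Rightarrow> real"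
  assumes "mono p" "finite K" "a \<le> b" "\<forall>k\<in>K. a \<le> l k \<and> l k \<le> u k \<and> u k \<le> b"
    and "\<forall>i\<in>K. \<forall>j\<in>K. i \<noteq> j \<longrightarrow> u i \<le> l j \<or> u j \<le> l i"
  shows "(\<Sum>k\<in>K. p (u k) - p (l k)) \<le> p b - p a"
  using assms(2-5)
proof (induction "card K" arbitrary: K b rule: less_induct)
  case less
  show ?case
  proof (cases "K = {}")
    case True
    then show ?thesis using less.prems assms(1) by (simp add: monoD)
  next
    case False
    obtain k0 where k0: "k0 \<in> K" "\<And>i. i \<in> K \<Longrightarrow> u i \<le> u k0"
      using Max_in[of "u ` K"] Max_ge[of "u ` K"] less.prems(1) False by fastforce
    \<comment> \<open>the intervals other than the rightmost one, discarding degenerate ones, lie left of it\<close>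
    define K' where "K' = {i \<in> K - {k0}. l i < u i}"
    have "K' \<subseteq> K - {k0}" by (auto simp: K'_def)
    then have card: "card K' < card K"
      using less.prems(1) k0(1) by (intro psubset_card_mono) auto
    have left: "\<forall>k\<in>K'. a \<le> l k \<and> l k \<le> u k \<and> u k \<le> l k0"
    proof
      fix i assume i: "i \<in> K'"
      then have "i \<in> K" "i \<noteq> k0" "l i < u i" by (auto simp: K'_def)
      moreover have "\<not> u k0 \<le> l i" using k0(2)[OF \<open>i \<in> K\<close>] \<open>l i < u i\<close> by linarith
      ultimately show "a \<le> l i \<and> l i \<le> u i \<and> u i \<le> l k0" using less.prems(3,4) k0(1) by blast
    qed
    have IH: "(\<Sum>k\<in>K'. p (u k) - p (l k)) \<le> p (l k0) - p a"
      using less.hyps[OF card _ _ left] less.prems k0(1) by (auto simp: K'_def)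
    have "(\<Sum>k\<in>K. p (u k) - p (l k)) = (p (u k0) - p (l k0)) + (\<Sum>k\<in>K - {k0}. p (u k) - p (l k))"
      using less.prems(1) k0(1) by (simp add: sum.remove)
    also have "(\<Sum>k\<in>K - {k0}. p (u k) - p (l k)) = (\<Sum>k\<in>K'. p (u k) - p (l k))"
      using less.prems(1,3) by (intro sum.mono_neutral_right) (force simp: K'_def)+
    finally show ?thesis
      using IH monoD[OF assms(1)] less.prems(3) k0(1) by force
  qed
qed

lemma layer_variation:
  assumes "finite K" "\<forall>k\<in>K. 0 \<le> l k \<and> l k \<le> u k \<and> u k \<le> 1"
    and "\<forall>i\<in>K. \<forall>j\<in>K. i \<noteq> j \<longrightarrow> u i \<le> l j \<or> u j \<le> l i"
  shows "(\<Sum>k\<in>K. \<bar>layer j (u k) - layer j (l k)\<bar>) \<le> 2 * period j"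
proof -
  let ?M = "height j / halfwidth j" and ?e = "halfwidth j"
  let ?t = "\<lambda>m. tent (centre j m) ?e ?M" and ?g = "\<lambda>m x. max (centre j m - ?e) (min x (centre j m + ?e))"
  have e0: "0 \<le> ?e" using halfwidth_pos[of j] by simp
  have "(\<Sum>k\<in>K. \<bar>layer j (u k) - layer j (l k)\<bar>) \<le> (\<Sum>k\<in>K. \<Sum>m<teeth j. \<bar>?t m (u k) - ?t m (l k)\<bar>)"
    unfolding layer_def sum_subtractf[symmetric] by (intro sum_mono sum_abs)
  also have "\<dots> = (\<Sum>m<teeth j. \<Sum>k\<in>K. \<bar>?t m (u k) - ?t m (l k)\<bar>)"
    by (rule sum.swap)
  also have "\<dots> \<le> (\<Sum>m<teeth j. \<Sum>k\<in>K. ?M * (?g m (u k) - ?g m (l k)))"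
    using assms(2) by (intro sum_mono tent_variation slope_nonneg e0) auto
  also have "\<dots> = (\<Sum>m<teeth j. ?M * (\<Sum>k\<in>K. ?g m (u k) - ?g m (l k)))"
    by (simp add: sum_distrib_left)
  also have "\<dots> \<le> (\<Sum>m<teeth j. ?M * (?g m 1 - ?g m 0))"
    using assms by (intro sum_mono mult_left_mono slope_nonneg sum_increments_le) (auto intro: monoI)
  also have "\<dots> \<le> (\<Sum>m<teeth j. ?M * (2 * ?e))"
    using e0 by (intro sum_mono mult_left_mono slope_nonneg) auto
  also have "\<dots> = 2 * period j ^ 3"
    using period_pos[of j] by (simp add: teeth_eq height_eq halfwidth_eq field_simps eval_nat_numeral)
  also have "\<dots> \<le> 2 * period j"
    using period_pos[of j] period_le[of j] power_decreasing[of 1 3 "period j"] by simp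
  finally show ?thesis .
qed

lemma tail_variation:
  assumes "finite K" "\<forall>k\<in>K. 0 \<le> l k \<and> l k \<le> u k \<and> u k \<le> 1"
    and "\<forall>i\<in>K. \<forall>j\<in>K. i \<noteq> j \<longrightarrow> u i \<le> l j \<or> u j \<le> l i"
  shows "(\<Sum>k\<in>K. \<bar>spike_tail J (u k) - spike_tail J (l k)\<bar>) \<le> 4 * period J"
proof -
  define d where "d k j = layer (j + J) (u k) - layer (j + J) (l k)" for k j
  have summable_d: "summable (\<lambda>j. \<bar>d k j\<bar>)" for k
  proof (rule summable_comparison_test[OF _ summable_height_shift[of J]])
    show "\<exists>N. \<forall>j\<ge>N. norm \<bar>d k j\<bar> \<le> height (j + J)"
      using layer_nonneg layer_le_height unfolding d_def
      by (intro exI[of _ 0] allI impI) (smt (verit) real_norm_def)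
  qed
  have summable_period: "summable (\<lambda>j. period J * (1 / 2) ^ j)"
    by (intro summable_mult summable_geometric) simp
  have "spike_tail J (u k) - spike_tail J (l k) = (\<Sum>j. d k j)" for k
    unfolding spike_tail_def d_def using suminf_diff[OF summable_layer_shift summable_layer_shift] by simp
  then have "(\<Sum>k\<in>K. \<bar>spike_tail J (u k) - spike_tail J (l k)\<bar>) \<le> (\<Sum>k\<in>K. \<Sum>j. \<bar>d k j\<bar>)"
    by (simp add: sum_mono summable_rabs summable_d)
  also have "\<dots> = (\<Sum>j. \<Sum>k\<in>K. \<bar>d k j\<bar>)"
    using summable_d by (simp add: suminf_sum)
  also have "\<dots> \<le> (\<Sum>j. 2 * (period J * (1 / 2) ^ j))"
  proof (rule suminf_le)
    show "(\<Sum>k\<in>K. \<bar>d k j\<bar>) \<le> 2 * (period J * (1 / 2) ^ j)" for j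
      using layer_variation[OF assms, of "j + J"] period_geometric[of j J] unfolding d_def by simp
  qed (use summable_d summable_period in \<open>auto intro: summable_sum summable_mult\<close>)
  also have "\<dots> = 4 * period J"
    by (simp add: suminf_mult suminf_geometric)
  finally show ?thesis .
qed

text \<open>The first \<open>J\<close> layers are Lipschitz with constant \<open>1 / period J\<close>, while the remaining
  ones have total variation at most \<open>4 * period J\<close>.\<close>
lemma spike_sum_variation_le:
  assumes "finite K" "\<forall>k\<in>K. 0 \<le> l k \<and> l k \<le> u k \<and> u k \<le> 1"
    and "\<forall>i\<in>K. \<forall>j\<in>K. i \<noteq> j \<longrightarrow> u i \<le> l j \<or> u j \<le> l i"
  shows "(\<Sum>k\<in>K. \<bar>spike_sum (u k) - spike_sum (l k)\<bar>) \<le> (\<Sum>k\<in>K. u k - l k) / period J + 4 * period J"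
proof -
  have "(\<Sum>k\<in>K. \<bar>spike_sum (u k) - spike_sum (l k)\<bar>)
      \<le> (\<Sum>k\<in>K. (u k - l k) / period J + \<bar>spike_tail J (u k) - spike_tail J (l k)\<bar>)"
  proof (intro sum_mono)
    fix k assume "k \<in> K"
    then show "\<bar>spike_sum (u k) - spike_sum (l k)\<bar>
        \<le> (u k - l k) / period J + \<bar>spike_tail J (u k) - spike_tail J (l k)\<bar>"
      using spike_sum_split[of "u k" J] spike_sum_split[of "l k" J] assms(2)
        head_lipschitz[where K = J and x = "u k" and y = "l k"] by simp
  qed
  also have "\<dots> = (\<Sum>k\<in>K. u k - l k) / period J + (\<Sum>k\<in>K. \<bar>spike_tail J (u k) - spike_tail J (l k)\<bar>)"
    by (simp add: sum.distrib sum_divide_distrib)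
  also have "\<dots> \<le> (\<Sum>k\<in>K. u k - l k) / period J + 4 * period J"
    using tail_variation[OF assms] by simp
  finally show ?thesis .
qed

lemma abs_continuous_spike_sum: "abs_continuous_on 0 1 spike_sum"
  unfolding abs_continuous_on_def
proof (intro allI impI)
  fix \<epsilon> :: real
  assume "0 < \<epsilon>"
  then obtain J where J: "period J < \<epsilon> / 8" using period_tendsto_0[of "\<epsilon> / 8"] by auto
  show "\<exists>\<delta>>0. \<forall>(n::nat) l u. (\<forall>k<n. 0 \<le> l k \<and> l k \<le> u k \<and> u k \<le> 1) \<and>
      (\<forall>i<n. \<forall>j<n. i \<noteq> j \<longrightarrow> u i \<le> l j \<or> u j \<le> l i) \<and> (\<Sum>k<n. u k - l k) < \<delta> \<longrightarrow>
      (\<Sum>k<n. \<bar>spike_sum (u k) - spike_sum (l k)\<bar>) < \<epsilon>"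
  proof (intro exI[of _ "\<epsilon> * period J / 2"] conjI allI impI, goal_cases)
    case 1
    show ?case using \<open>0 < \<epsilon>\<close> period_pos[of J] by simp
  next
    case (2 n l u)
    then have "(\<Sum>k<n. u k - l k) / period J < \<epsilon> / 2"
      using period_pos[of J] by (simp add: field_simps)
    moreover have "(\<Sum>k<n. \<bar>spike_sum (u k) - spike_sum (l k)\<bar>)
        \<le> (\<Sum>k<n. u k - l k) / period J + 4 * period J"
      using 2 by (intro spike_sum_variation_le) auto
    ultimately show ?case using J by linarith
  qed
qed

section \<open>Strong porosity\<close>

lemma exists_point_far_from_line:
  fixes a b xl xr Y r len :: real
  assumes "xr - xl = len / 2" "0 \<le> len"
  shows "\<exists>x\<in>{xl, xr}. \<exists>y\<in>{Y - r / 2, Y + r / 2}. (\<bar>a\<bar> * len / 2 + \<bar>r\<bar>) / 4 \<le> \<bar>a * x + b - y\<bar>"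
proof (rule ccontr)
  let ?B = "(\<bar>a\<bar> * len / 2 + \<bar>r\<bar>) / 4"
  have eq: "(a * xr + b - (Y + r / 2)) - (a * xl + b - (Y + r / 2)) = a * (len / 2)"
    using assms(1) by (simp flip: right_diff_distrib)
  have diff: "\<bar>(a * xr + b - (Y + r / 2)) - (a * xl + b - (Y + r / 2))\<bar> = \<bar>a\<bar> * len / 2"
    unfolding eq using assms(2) by (simp add: abs_mult)
  have "\<bar>r\<bar> \<le> \<bar>a * xl + b - (Y - r / 2)\<bar> + \<bar>a * xl + b - (Y + r / 2)\<bar>"
    using abs_triangle_ineq4[of "a * xl + b - (Y - r / 2)" "a * xl + b - (Y + r / 2)"] by simp
  moreover have "\<bar>a\<bar> * len / 2 \<le> \<bar>a * xr + b - (Y + r / 2)\<bar> + \<bar>a * xl + b - (Y + r / 2)\<bar>"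
    using diff abs_triangle_ineq4 by metis
  moreover assume "\<not> ?thesis"
  then have "\<bar>a * xl + b - (Y - r / 2)\<bar> < ?B" "\<bar>a * xl + b - (Y + r / 2)\<bar> < ?B"
    "\<bar>a * xr + b - (Y + r / 2)\<bar> < ?B"
    by auto
  ultimately show False by argo
qed

definition affine_on :: "real set \<Rightarrow> (real \<Rightarrow> real) \<Rightarrow> bool" where
  "affine_on S g \<longleftrightarrow> (\<exists>\<alpha> \<beta>. \<forall>x\<in>S. g x = \<alpha> * x + \<beta>)"

lemma affine_on_sum:
  "finite I \<Longrightarrow> (\<And>i. i \<in> I \<Longrightarrow> affine_on S (g i)) \<Longrightarrow> affine_on S (\<lambda>x. \<Sum>i\<in>I. g i x)"
proof (induction I rule: finite_induct)
  case empty
  then show ?case by (auto simp: affine_on_def intro: exI[of _ 0])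
next
  case (insert i I)
  obtain \<alpha>1 \<beta>1 where "\<forall>x\<in>S. g i x = \<alpha>1 * x + \<beta>1"
    using insert.prems[of i] by (auto simp: affine_on_def)
  moreover obtain \<alpha>2 \<beta>2 where "\<forall>x\<in>S. (\<Sum>i\<in>I. g i x) = \<alpha>2 * x + \<beta>2"
    using insert.IH insert.prems by (auto simp: affine_on_def)
  ultimately have "\<forall>x\<in>S. (\<Sum>i\<in>insert i I. g i x) = (\<alpha>1 + \<alpha>2) * x + (\<beta>1 + \<beta>2)"
    using insert.hyps by (simp add: algebra_simps)
  then show ?case by (auto simp: affine_on_def)
qed

lemma dist_Pair_le_three_quarters:
  fixes a b c d r :: real
  assumes "\<bar>a - c\<bar> \<le> r / 2" "\<bar>b - d\<bar> = r / 2"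
  shows "dist (a, b) (c, d) \<le> 3 * r / 4"
proof -
  have "(a - c)\<^sup>2 \<le> (r / 2)\<^sup>2" "(b - d)\<^sup>2 = (r / 2)\<^sup>2"
    using assms by (metis abs_ge_zero power2_abs power_mono, metis power2_abs)
  moreover have "(3 * r / 4)\<^sup>2 = 2 * (r / 2)\<^sup>2 + (r / 4)\<^sup>2"
    by (simp add: power2_eq_square field_simps)
  ultimately have "(a - c)\<^sup>2 + (b - d)\<^sup>2 \<le> (3 * r / 4)\<^sup>2"
    using zero_le_power2[of "r / 4"] by linarith
  then have "sqrt ((a - c)\<^sup>2 + (b - d)\<^sup>2) \<le> 3 * r / 4"
    using assms(2) by (intro real_le_lsqrt) auto
  then show ?thesis by (simp add: dist_Pair_Pair dist_real_def)
qed

text \<open>If the graph of \<open>g\<close> is uniformly close to a line over an interval of length \<open>len\<close> inside the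
  window of the ball, one of four points at distance \<open>r / 2\<close> above or below the centre and a quarter
  of the interval from its midpoint is at distance \<open>len / 32\<close> from the graph.\<close>
lemma ball_avoiding_graph_near_line:
  assumes "u < v" "v - u \<le> r" "x0 - r / 2 \<le> u" "v \<le> x0 + r / 2"
    and near: "\<forall>x\<in>{u..v}. \<bar>g x - (a * x + b)\<bar> \<le> (v - u) / 32"
  shows "\<exists>y. ball y ((v - u) / 32) \<subseteq> ball (x0, Y0) r - graph_on S g"
proof -
  define len where "len = v - u"
  have len: "0 < len" "len \<le> r" using assms(1,2) by (auto simp: len_def)
  have quarter: "(v - len / 4) - (u + len / 4) = len / 2" by (simp add: len_def field_simps)
  obtain x' Y where x': "x' \<in> {u + len / 4, v - len / 4}"
    and Y: "Y \<in> {Y0 - r / 2, Y0 + r / 2}" and far: "(\<bar>a\<bar> * len / 2 + \<bar>r\<bar>) / 4 \<le> \<bar>a * x' + b - Y\<bar>"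
    using exists_point_far_from_line[OF quarter less_imp_le[OF len(1)], where a = a and b = b and Y = Y0 and r = r]
    by blast
  have x'_in: "u + len / 4 \<le> x'" "x' \<le> v - len / 4" using x' len by (auto simp: len_def field_simps)
  show ?thesis
  proof (intro exI[of _ "(x', Y)"] subsetI DiffI)
    fix p assume p: "p \<in> ball (x', Y) ((v - u) / 32)"
    have "\<bar>x' - x0\<bar> \<le> r / 2"
      using x'_in assms(3,4) len unfolding abs_le_iff by linarith
    moreover have "\<bar>Y - Y0\<bar> = r / 2" using Y len by auto
    ultimately have "dist (x', Y) (x0, Y0) \<le> 3 * r / 4" by (rule dist_Pair_le_three_quarters)
    then show "p \<in> ball (x0, Y0) r"
      using p len dist_triangle3[of "(x0, Y0)" p "(x', Y)"] by (simp add: len_def dist_commute)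
    show "p \<notin> graph_on S g"
    proof
      assume "p \<in> graph_on S g"
      then obtain x where p_eq: "p = (x, g x)" by (auto simp: graph_on_def)
      have "dist (x', Y) p < len / 32" using p by (simp add: len_def)
      then have x_close: "\<bar>x' - x\<bar> < len / 32" and y_close: "\<bar>Y - g x\<bar> < len / 32"
        using dist_fst_le[of "(x', Y)" p] dist_snd_le[of "(x', Y)" p] p_eq by (simp_all add: dist_real_def)
      then have "x \<in> {u..v}" using x'_in len unfolding abs_less_iff by auto
      then have "\<bar>g x - (a * x + b)\<bar> \<le> len / 32" using near by (simp add: len_def)
      moreover have "\<bar>a * x - a * x'\<bar> \<le> \<bar>a\<bar> * len / 32"
        unfolding right_diff_distrib[symmetric] abs_mult times_divide_eq_right[symmetric]
        using x_close by (intro mult_left_mono) (auto simp: abs_minus_commute)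
      moreover have "\<bar>a * x' + b - Y\<bar> \<le> \<bar>a * x - a * x'\<bar> + \<bar>g x - (a * x + b)\<bar> + \<bar>Y - g x\<bar>"
        by arith
      moreover have "0 \<le> \<bar>a\<bar> * len" "len \<le> \<bar>r\<bar>" using len by auto
      ultimately show False using far y_close by argo
    qed
  qed
qed

definition kink :: "nat \<Rightarrow> real \<Rightarrow> bool" where
  "kink j y \<longleftrightarrow> (\<exists>m<teeth j. y \<in> {centre j m - halfwidth j, centre j m, centre j m + halfwidth j})"

lemma affine_on_tent:
  assumes "c \<notin> {p..q}" "c - e \<notin> {p..q}" "c + e \<notin> {p..q}"
  shows "affine_on {p..q} (tent c e M)"
proof (cases "c < p")
  case True
  show ?thesis
  proof (cases "c + e < p")
    case True
    then have "\<forall>x\<in>{p..q}. tent c e M x = 0 * x + 0" by (auto intro!: tent_eq_0 simp: abs_if)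
    then show ?thesis unfolding affine_on_def by blast
  next
    case False
    then have "q < c + e" using assms(3) by auto
    then have "\<forall>x\<in>{p..q}. tent c e M x = (- M) * x + M * (e + c)"
      using \<open>c < p\<close> by (simp add: tent_def algebra_simps)
    then show ?thesis unfolding affine_on_def by blast
  qed
next
  case False
  then have "q < c" using assms(1) by auto
  show ?thesis
  proof (cases "q < c - e")
    case True
    then have "\<forall>x\<in>{p..q}. tent c e M x = 0 * x + 0" by (auto intro!: tent_eq_0 simp: abs_if)
    then show ?thesis unfolding affine_on_def by blast
  next
    case False
    then have "c - e < p" using assms(2) by auto
    then have "\<forall>x\<in>{p..q}. tent c e M x = M * x + M * (e - c)"
      using \<open>q < c\<close> by (simp add: tent_def algebra_simps)
    then show ?thesis unfolding affine_on_def by blast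
  qed
qed

lemma affine_on_head:
  assumes "\<forall>j<K. \<forall>y\<in>{p..q}. \<not> kink j y"
  shows "affine_on {p..q} (\<lambda>x. \<Sum>j<K. layer j x)"
proof (intro affine_on_sum)
  fix j assume "j \<in> {..<K}"
  then have no_kink: "\<forall>y\<in>{p..q}. \<not> kink j y" using assms by simp
  have "kink j (centre j m)" "kink j (centre j m - halfwidth j)" "kink j (centre j m + halfwidth j)"
    if "m < teeth j" for m
    using that by (auto simp: kink_def)
  then show "affine_on {p..q} (layer j)"
    unfolding layer_def using no_kink by (intro affine_on_sum affine_on_tent) blast+
qed simp

text \<open>Each coarser period is a power-of-two multiple of \<open>period J\<close>.\<close>
lemma kink_on_grid:
  assumes "j < J" "kink j y"
  shows "\<exists>i::int. y = of_int i * period J"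
proof -
  obtain m where m: "y \<in> {centre j m - halfwidth j, centre j m, centre j m + halfwidth j}"
    using assms(2) by (auto simp: kink_def)
  have "(4::nat) ^ (3 * j) < 4 ^ (3 * J)" using assms(1) by (intro power_strict_increasing) auto
  then obtain d where d: "16 * 4 ^ (3 * J) - 16 * 4 ^ (3 * j) = Suc d" by (metis Suc_diff_Suc mult_less_mono2 zero_less_numeral)
  have "period j = 2 ^ Suc d * period J"
    unfolding period_def using scale_ratio[of "3 * j" "3 * J"] assms(1) d by simp
  then have c: "centre j m = of_int ((2 * int m + 1) * 2 ^ d) * period J"
    by (simp add: centre_def field_simps)
  define e :: nat where "e = 16 * 4 ^ (3 * J) - 16 * 4 ^ (3 * j + 2)"
  have h: "halfwidth j = 2 ^ e * period J"
    unfolding halfwidth_def period_def e_def using scale_ratio[of "3 * j + 2" "3 * J"] assms(1) by simp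
  have "y = of_int ((2 * int m + 1) * 2 ^ d - 2 ^ e) * period J \<or> y = of_int ((2 * int m + 1) * 2 ^ d) * period J
      \<or> y = of_int ((2 * int m + 1) * 2 ^ d + 2 ^ e) * period J"
    using m c h by (auto simp: algebra_simps)
  then show ?thesis by blast
qed

text \<open>A window of length \<open>len \<le> period J / 8\<close> meets the kinks of the layers \<open>j \<le> J\<close> in at most
  five points: two grid points of spacing \<open>period J\<close> and the three kinks of one tooth of layer \<open>J\<close>.\<close>
lemma kinks_in_window:
  assumes "0 < len" "8 * len \<le> period J" "j \<le> J" "kink j y" "w \<le> y" "y \<le> w + len"
  defines "m0 \<equiv> \<lfloor>w / period J\<rfloor>"
  shows "y \<in> {of_int m0 * period J, (of_int m0 + 1) * period J, (of_int m0 + 1 / 2) * period J - halfwidth J,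
               (of_int m0 + 1 / 2) * period J, (of_int m0 + 1 / 2) * period J + halfwidth J}"
proof -
  let ?L = "period J"
  have L: "0 < ?L" by (rule period_pos)
  have "of_int m0 \<le> w / ?L" "w / ?L < of_int m0 + 1" unfolding m0_def by linarith+
  then have w: "of_int m0 * ?L \<le> w" "w < (of_int m0 + 1) * ?L" using L by (simp_all add: field_simps)
  show ?thesis
  proof (cases "j < J")
    case True
    then obtain i where i: "y = of_int i * ?L" using kink_on_grid assms(4) by blast
    have "(of_int m0 + 2) * ?L = (of_int m0 + 1) * ?L + ?L" by (simp add: algebra_simps)
    then have "of_int m0 * ?L \<le> of_int i * ?L" "of_int i * ?L < (of_int m0 + 2) * ?L"
      using w assms(1,2,5,6) i by linarith+
    then have "m0 \<le> i" "i < m0 + 2" using L by (simp_all add: mult_le_cancel_right mult_less_cancel_right)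
    then have "i = m0 \<or> i = m0 + 1" by linarith
    then show ?thesis using i by auto
  next
    case False
    then obtain m where m: "y \<in> {centre J m - halfwidth J, centre J m, centre J m + halfwidth J}"
      using assms(3,4) by (auto simp: kink_def)
    have "halfwidth J \<le> ?L / 16" by (rule halfwidth_le)
    then have "(of_int m0 - 1 / 2 - 1 / 16) * ?L \<le> real m * ?L" "real m * ?L < (of_int m0 + 1 / 2 + 1 / 8 + 1 / 16) * ?L"
      using m w assms(1,2,5,6) halfwidth_pos[of J] by (auto simp: centre_def algebra_simps)
    then have "of_int m0 - 1 / 2 - 1 / 16 \<le> real m" "real m < of_int m0 + 1 / 2 + 1 / 8 + 1 / 16"
      using L by (simp_all add: mult_le_cancel_right mult_less_cancel_right)
    then have "int m = m0" by linarith
    then show ?thesis using m by (auto simp: centre_def)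
  qed
qed

lemma five_points_miss_a_sixth:
  fixes P :: "real set"
  assumes "finite P" "card P \<le> 5" "0 < len"
  shows "\<exists>i<(6::nat). \<forall>p\<in>P. p \<notin> {w + real i * len / 6 + len / 24 .. w + (real i + 1) * len / 6 - len / 24}"
proof (rule ccontr)
  assume "\<not> ?thesis"
  then obtain f where f: "\<And>i. i < 6 \<Longrightarrow> f i \<in> P \<and> f i \<in> {w + real i * len / 6 + len / 24 .. w + (real i + 1) * len / 6 - len / 24}"
    by metis
  have "inj_on f {..<6}"
  proof (rule inj_onI)
    fix i i' assume "i \<in> {..<6}" "i' \<in> {..<(6::nat)}" "f i = f i'"
    then have "real i * len < (real i' + 1) * len" "real i' * len < (real i + 1) * len"
      using f[of i] f[of i'] assms(3) by (auto simp: field_simps)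
    then have "real i < real i' + 1" "real i' < real i + 1"
      using assms(3) by (simp_all add: mult_less_cancel_right_pos)
    then show "i = i'" by linarith
  qed
  then have "card {..<(6::nat)} \<le> card P"
    using f assms(1) by (intro card_inj_on_le) auto
  then show False using assms(2) by simp
qed

text \<open>Let \<open>J\<close> be the last layer whose period is at least \<open>8 len\<close>. Some sixth of the window avoids all
  kinks of layers \<open>\<le> J\<close>, so there the first \<open>J + 1\<close> layers are affine and the rest is tiny.\<close>
lemma spike_sum_nearly_affine_subinterval:
  assumes "0 < len"
  shows "\<exists>u v a b. w \<le> u \<and> v \<le> w + len \<and> v - u = len / 12 \<and>
           (\<forall>x\<in>{u..v}. \<bar>spike_sum x - (a * x + b)\<bar> \<le> (len / 12) / 32)"
proof -
  obtain K where K: "period K < 8 * len" using period_tendsto_0[of "8 * len"] assms by auto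
  define n where "n = (LEAST n. period n < 8 * len)"
  have n: "period n < 8 * len" unfolding n_def by (rule LeastI[of _ K]) (rule K)
  have coarse: "8 * len \<le> period j" if "j < n" for j
    using not_less_Least[of j "\<lambda>n. period n < 8 * len"] that unfolding n_def by simp
  define J where "J = n - 1"
  define m0 where "m0 = \<lfloor>w / period J\<rfloor>"
  define P where "P = set [of_int m0 * period J, (of_int m0 + 1) * period J,
    (of_int m0 + 1 / 2) * period J - halfwidth J, (of_int m0 + 1 / 2) * period J, (of_int m0 + 1 / 2) * period J + halfwidth J]"
  have "finite P" "card P \<le> 5" unfolding P_def by (simp, rule order_trans[OF card_length], simp)
  then obtain i where i: "i < (6::nat)"
    and free: "\<forall>p\<in>P. p \<notin> {w + real i * len / 6 + len / 24 .. w + (real i + 1) * len / 6 - len / 24}"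
    using five_points_miss_a_sixth assms by blast
  define u where "u = w + real i * len / 6 + len / 24"
  define v where "v = w + (real i + 1) * len / 6 - len / 24"
  have "real i \<le> 5" using i by simp
  then have uv: "w \<le> u" "v \<le> w + len" "v - u = len / 12"
    using assms by (simp_all add: u_def v_def field_simps)
  have "\<forall>j<n. \<forall>y\<in>{u..v}. \<not> kink j y"
  proof (intro allI impI ballI notI)
    fix j y assume j: "j < n" and y: "y \<in> {u..v}" "kink j y"
    then have "J < n" "j \<le> J" by (auto simp: J_def)
    then have "y \<in> P"
      using kinks_in_window[OF assms coarse \<open>j \<le> J\<close> \<open>kink j y\<close>, of w] y(1) uv
      unfolding P_def m0_def by auto
    then show False using free y(1) unfolding u_def v_def by blast
  qed
  then have "affine_on {u..v} (\<lambda>x. \<Sum>j<n. layer j x)" by (rule affine_on_head)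
  then obtain a b where ab: "\<forall>x\<in>{u..v}. (\<Sum>j<n. layer j x) = a * x + b"
    unfolding affine_on_def by blast
  have "height n * 281474976710656 \<le> period n" using height_le[of n] by (simp add: field_simps)
  then have small: "2 * height n \<le> (len / 12) / 32" using n height_pos[of n] by simp
  have "\<bar>spike_sum x - (a * x + b)\<bar> \<le> (len / 12) / 32" if "x \<in> {u..v}" for x
  proof -
    have "spike_sum x - (a * x + b) = spike_tail n x"
      using spike_sum_split[of x n] ab that by simp
    then show ?thesis using spike_tail_nonneg[of n x] spike_tail_le[of n x] small by simp
  qed
  then show ?thesis using uv by blast
qed

lemma ball_avoiding_graph_spike_sum:
  assumes "0 < r"
  shows "\<exists>y. ball y (r / 768) \<subseteq> ball x r - graph_on S spike_sum"
proof -
  obtain x0 Y0 where x: "x = (x0, Y0)" by fastforce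
  obtain u v a b where uv: "x0 \<le> u" "v \<le> x0 + r / 2" "v - u = r / 2 / 12"
    and near: "\<forall>t\<in>{u..v}. \<bar>spike_sum t - (a * t + b)\<bar> \<le> r / 2 / 12 / 32"
    using spike_sum_nearly_affine_subinterval[OF half_gt_zero[OF assms], where w = x0] by blast
  then have "\<exists>y. ball y ((v - u) / 32) \<subseteq> ball (x0, Y0) r - graph_on S spike_sum"
    using assms by (intro ball_avoiding_graph_near_line[where a = a and b = b]) auto
  then show ?thesis using uv(3) x by simp
qed

theorem strongly_porous_graph_spike_sum: "strongly_porous (graph_on {0..1} spike_sum)"
  unfolding strongly_porous_def
  using ball_avoiding_graph_spike_sum by (intro exI[of _ "1 / 768"]) auto

section \<open>Fine chains and monotone orders\<close>

inductive fine_chain :: "'a::metric_space set \<Rightarrow> real \<Rightarrow> 'a \<Rightarrow> 'a \<Rightarrow> bool" for S s where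
  fine_chain_refl: "P \<in> S \<Longrightarrow> fine_chain S s P P"
| fine_chain_step: "fine_chain S s P Q \<Longrightarrow> R \<in> S \<Longrightarrow> dist Q R \<le> s \<Longrightarrow> fine_chain S s P R"

lemma fine_chain_mono:
  assumes "fine_chain S s P Q" "S \<subseteq> T"
  shows "fine_chain T s P Q"
  using assms(1)
proof (induction rule: fine_chain.induct)
  case (fine_chain_refl P)
  then show ?case using assms(2) by (simp add: fine_chain.fine_chain_refl subsetD)
next
  case (fine_chain_step P Q R)
  then show ?case using assms(2) by (metis fine_chain.fine_chain_step subsetD)
qed

lemma fine_chain_in: "fine_chain S s P Q \<Longrightarrow> P \<in> S \<and> Q \<in> S"
  by (induction rule: fine_chain.induct) simp_all

lemma fine_chain_trans:
  assumes "fine_chain S s P Q" "fine_chain S s Q R"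
  shows "fine_chain S s P R"
  using assms(2,1)
proof (induction rule: fine_chain.induct)
  case (fine_chain_step Q R R')
  then show ?case by (metis fine_chain.fine_chain_step)
qed

lemma fine_chain_sym: "fine_chain S s P Q \<Longrightarrow> fine_chain S s Q P"
proof (induction rule: fine_chain.induct)
  case (fine_chain_refl P)
  then show ?case by (rule fine_chain.fine_chain_refl)
next
  case (fine_chain_step P Q R)
  have "fine_chain S s R Q"
    using fine_chain_step.hyps(2,3) fine_chain_in[OF fine_chain_step.hyps(1)]
    by (metis dist_commute fine_chain.fine_chain_refl fine_chain.fine_chain_step)
  then show ?case using fine_chain_trans fine_chain_step.IH by blast
qed

lemma connected_imp_fine_chain:
  assumes "connected S" "P \<in> S" "Q \<in> S" "0 < s"
  shows "fine_chain S s P Q"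
proof (rule connected_equivalence_relation[OF assms(1-3)])
  show "fine_chain S s y x" if "fine_chain S s x y" for x y
    using that by (rule fine_chain_sym)
  show "fine_chain S s x z" if "fine_chain S s x y" "fine_chain S s y z" for x y z
    using that by (rule fine_chain_trans)
next
  fix a assume "a \<in> S"
  show "\<exists>T. openin (top_of_set S) T \<and> a \<in> T \<and> (\<forall>x\<in>T. fine_chain S s a x)"
  proof (intro exI conjI ballI)
    show "openin (top_of_set S) (S \<inter> ball a s)" by (simp add: openin_open_Int)
    show "a \<in> S \<inter> ball a s" using \<open>a \<in> S\<close> assms(4) by simp
    fix x assume "x \<in> S \<inter> ball a s"
    then show "fine_chain S s a x"
      using \<open>a \<in> S\<close> by (intro fine_chain_step[OF fine_chain_refl]) auto
  qed
qed

definition strictly_between :: "'a rel \<Rightarrow> 'a \<Rightarrow> 'a \<Rightarrow> 'a \<Rightarrow> bool" where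
  "strictly_between R p z q \<longleftrightarrow>
     ((p, z) \<in> R \<and> p \<noteq> z \<and> (z, q) \<in> R \<and> z \<noteq> q) \<or> ((q, z) \<in> R \<and> q \<noteq> z \<and> (z, p) \<in> R \<and> z \<noteq> p)"

lemma strictly_between_one_of_three:
  assumes "linear_order_on A R" "x \<in> A" "y \<in> A" "z \<in> A" "x \<noteq> y" "y \<noteq> z" "x \<noteq> z"
  shows "strictly_between R x y z \<or> strictly_between R y x z \<or> strictly_between R x z y"
  using assms unfolding strictly_between_def linear_order_on_def partial_order_on_def preorder_on_def
    total_on_def antisym_def trans_def
  by metis

lemma monotonicity_margin:
  fixes c D s :: real
  assumes "0 < c" "0 < D" "2 * c * s \<le> D"
  obtains \<eta> where "0 < \<eta>" "\<eta> < D / 4" "c * (s + 2 * \<eta>) + 2 * \<eta> < D"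
proof
  define \<eta> where "\<eta> = D / (8 * (c + 1))"
  show \<eta>_pos: "0 < \<eta>" using assms by (simp add: \<eta>_def)
  have \<eta>_c: "2 * \<eta> * (c + 1) = D / 4" using assms(1) by (simp add: \<eta>_def field_simps)
  have "\<eta> * 1 \<le> \<eta> * (c + 1)" using \<eta>_pos assms(1) by (intro mult_left_mono) auto
  then show "\<eta> < D / 4" using \<eta>_pos \<eta>_c by linarith
  have "c * (s + 2 * \<eta>) + 2 * \<eta> = c * s + 2 * \<eta> * (c + 1)" by (simp add: algebra_simps)
  then show "c * (s + 2 * \<eta>) + 2 * \<eta> < D" using \<eta>_c assms(2,3) by linarith
qed

locale monotone_order =
  fixes A :: "'a::metric_space set" and R :: "'a rel" and c :: real
  assumes linear: "linear_order_on A R" and c_pos: "0 < c"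
    and monotone: "\<forall>x\<in>A. \<forall>y\<in>A. \<forall>z\<in>A. (x, y) \<in> R \<and> x \<noteq> y \<and> (y, z) \<in> R \<and> y \<noteq> z \<longrightarrow> dist x y \<le> c * dist x z"
begin

lemma dist_to_between_le:
  assumes "p \<in> A" "z \<in> A" "q \<in> A" "strictly_between R p z q"
  shows "min (dist p z) (dist q z) \<le> c * dist p q"
  using assms monotone unfolding strictly_between_def
  by (metis dist_commute min.coboundedI1 min.coboundedI2)

lemma strictly_between_iff_sides:
  assumes "p \<in> A" "z \<in> A" "q \<in> A" "p \<noteq> z" "q \<noteq> z"
  shows "strictly_between R p z q \<longleftrightarrow> ((p, z) \<in> R \<longleftrightarrow> (q, z) \<notin> R)"
  using assms linear unfolding strictly_between_def linear_order_on_def partial_order_on_def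
    total_on_def antisym_def
  by blast

text \<open>Monotonicity forbids a point \<open>z\<close> of \<open>A\<close> to lie between two points of \<open>A\<close> that are much closer
  to each other than to \<open>z\<close>; so when we walk along a fine chain staying far from \<open>z\<close>, nearby
  points of \<open>A\<close> never change sides of \<open>z\<close>.\<close>
lemma same_side_along_fine_chain:
  assumes "0 < \<eta>" "z \<in> A" "S \<subseteq> closure A"
    and far: "\<forall>X\<in>S. c * (s + 2 * \<eta>) + \<eta> < dist X z"
    and "fine_chain S s P Q" "a \<in> A" "dist a P < \<eta>"
  shows "\<exists>b\<in>A. dist b Q < \<eta> \<and> ((a, z) \<in> R \<longleftrightarrow> (b, z) \<in> R)"
  using assms(5-7)
proof (induction arbitrary: a rule: fine_chain.induct)
  case (fine_chain_refl P)
  then show ?case by blast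
next
  case (fine_chain_step P Q Q')
  then obtain b where b: "b \<in> A" "dist b Q < \<eta>" "(a, z) \<in> R \<longleftrightarrow> (b, z) \<in> R" by blast
  have "Q' \<in> closure A" using fine_chain_step.hyps(2) assms(3) by blast
  then obtain b' where b': "b' \<in> A" "dist b' Q' < \<eta>"
    using assms(1) by (auto simp: closure_approachable)
  have "Q \<in> S" using fine_chain_in[OF fine_chain_step.hyps(1)] by simp
  then have far_b: "c * (s + 2 * \<eta>) < dist b z" "c * (s + 2 * \<eta>) < dist b' z"
    using far fine_chain_step.hyps(2) b(2) b'(2) dist_triangle[of Q z b] dist_triangle[of Q' z b']
    by (auto simp: dist_commute)
  have "dist b b' \<le> dist b Q + dist Q Q' + dist Q' b'"
    using dist_triangle[of b b' Q] dist_triangle[of Q b' Q'] by linarith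
  then have "c * dist b b' < c * (s + 2 * \<eta>)"
    using b(2) b'(2) fine_chain_step.hyps(3) c_pos by (simp add: dist_commute)
  then have "\<not> strictly_between R b z b'"
    using dist_to_between_le[OF b(1) assms(2) b'(1)] far_b by linarith
  moreover have "0 \<le> s" using fine_chain_step.hyps(3) by (rule order_trans[OF zero_le_dist])
  then have "0 \<le> c * (s + 2 * \<eta>)" using c_pos \<open>0 < \<eta>\<close> by (intro mult_nonneg_nonneg) auto
  then have "b \<noteq> z" "b' \<noteq> z" using far_b by auto
  ultimately have "(b', z) \<in> R \<longleftrightarrow> (b, z) \<in> R"
    using strictly_between_iff_sides[OF b(1) assms(2) b'(1)] by blast
  then show ?case using b b' by blast
qed

lemma fine_chain_not_straddled:
  assumes "0 < \<eta>" "z \<in> A" "S \<subseteq> closure A" "0 \<le> s"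
    and far: "\<forall>X\<in>S. c * (s + 2 * \<eta>) + \<eta> < dist X z"
    and "fine_chain S s P Q" "p \<in> A" "dist p P < \<eta>" "q \<in> A" "dist q Q < \<eta>"
  shows "\<not> strictly_between R p z q"
proof
  assume between: "strictly_between R p z q"
  obtain b where b: "b \<in> A" "dist b Q < \<eta>" "(p, z) \<in> R \<longleftrightarrow> (b, z) \<in> R"
    using same_side_along_fine_chain[OF assms(1-3) far assms(6-8)] by blast
  have "Q \<in> S" using fine_chain_in[OF assms(6)] by simp
  then have far_b: "c * (s + 2 * \<eta>) < dist b z" "c * (s + 2 * \<eta>) < dist q z"
    using far b(2) assms(10) dist_triangle[of Q z b] dist_triangle[of Q z q] by (auto simp: dist_commute)
  have "p \<noteq> z" "q \<noteq> z" using between by (auto simp: strictly_between_def)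
  moreover have "0 \<le> c * (s + 2 * \<eta>)" using c_pos assms(1,4) by (intro mult_nonneg_nonneg) auto
  then have "b \<noteq> z" using far_b by auto
  ultimately have "strictly_between R b z q"
    using between b(3) strictly_between_iff_sides[OF assms(7) assms(2) assms(9)]
      strictly_between_iff_sides[OF b(1) assms(2) assms(9)] by blast
  moreover have "c * dist b q \<le> c * (s + 2 * \<eta>)"
    using b(2) assms(4,10) dist_triangle2[of b q Q] c_pos by (intro mult_left_mono) auto
  ultimately show False
    using dist_to_between_le[OF b(1) assms(2,9)] far_b by linarith
qed

text \<open>Points of \<open>A\<close> near the three points are distinct, so one of them lies between the other two,
  which the chain joining those two forbids.\<close>
lemma no_three_points_separated_by_fine_chains:
  assumes "0 < D" "0 \<le> s" "2 * c * s \<le> D"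
    and "fine_chain S1 s P2 P3" "fine_chain S2 s P1 P3" "fine_chain S3 s P1 P2"
    and "S1 \<union> S2 \<union> S3 \<subseteq> closure A"
    and "\<forall>X\<in>S1. D \<le> dist X P1" "\<forall>X\<in>S2. D \<le> dist X P2" "\<forall>X\<in>S3. D \<le> dist X P3"
  shows False
proof -
  obtain \<eta> where \<eta>: "0 < \<eta>" "\<eta> < D / 4" "c * (s + 2 * \<eta>) + 2 * \<eta> < D"
    using monotonicity_margin[OF c_pos assms(1,3)] by blast
  have P: "P1 \<in> closure A" "P2 \<in> closure A" "P3 \<in> closure A"
    using assms(4-7) fine_chain_in by blast+
  obtain z1 z2 z3 where z: "z1 \<in> A" "dist z1 P1 < \<eta>" "z2 \<in> A" "dist z2 P2 < \<eta>" "z3 \<in> A" "dist z3 P3 < \<eta>"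
    using P \<eta>(1) unfolding closure_approachable by metis
  have far: "\<forall>X\<in>S. c * (s + 2 * \<eta>) + \<eta> < dist X z"
    if "\<forall>X\<in>S. D \<le> dist X P" "dist z P < \<eta>" for S P z
  proof
    fix X assume "X \<in> S"
    then show "c * (s + 2 * \<eta>) + \<eta> < dist X z"
      using that \<eta>(3) dist_triangle[of X P z] by auto
  qed
  have "P2 \<in> S1" "P3 \<in> S1" "P2 \<in> S3" using fine_chain_in assms(4,6) by blast+
  then have "D \<le> dist P1 P2" "D \<le> dist P2 P3" "D \<le> dist P1 P3"
    using assms(8,10) by (auto simp: dist_commute)
  moreover have "z \<noteq> z'" if "D \<le> dist P P'" "dist z P < \<eta>" "dist z' P' < \<eta>" for z z' P P'
  proof
    assume "z = z'"
    then have "dist P P' < 2 * \<eta>"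
      using that(2,3) dist_triangle3[of P P' z] by simp
    then show False using that(1) \<eta>(1,2) by linarith
  qed
  ultimately have "z1 \<noteq> z2" "z2 \<noteq> z3" "z1 \<noteq> z3" using z by blast+
  then consider "strictly_between R z1 z2 z3" | "strictly_between R z2 z1 z3" | "strictly_between R z1 z3 z2"
    using strictly_between_one_of_three[OF linear z(1,3,5)] by blast
  then show False
  proof cases
    case 1
    then show False
      using fine_chain_not_straddled[OF \<eta>(1) z(3) _ assms(2) far assms(5) z(1,2,5,6)] assms(7,9) z(4) by blast
  next
    case 2
    then show False
      using fine_chain_not_straddled[OF \<eta>(1) z(1) _ assms(2) far assms(4) z(3,4,5,6)] assms(7,8) z(2) by blast
  next
    case 3
    then show False
      using fine_chain_not_straddled[OF \<eta>(1) z(5) _ assms(2) far assms(6) z(1,2,3,4)] assms(7,10) z(6) by blast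
  qed
qed

end


section \<open>Monotone subsets of the graph\<close>

lemma continuous_on_graph_spike_sum: "continuous_on S (\<lambda>x. (x, spike_sum x))"
  using uniformly_continuous_spike_sum
  by (intro continuous_intros) (auto intro: continuous_on_subset uniformly_continuous_imp_continuous)

lemma spike_sum_diff_layer:
  "\<bar>(spike_sum x - spike_sum y) - (layer k x - layer k y)\<bar> \<le> \<bar>x - y\<bar> / period k + 2 * height (Suc k)"
  using spike_sum_split_Suc[of x k] spike_sum_split_Suc[of y k] head_lipschitz[where K = k and x = x and y = y]
    spike_tail_nonneg[of "Suc k" x] spike_tail_nonneg[of "Suc k" y]
    spike_tail_le[of "Suc k" x] spike_tail_le[of "Suc k" y]
  by linarith

lemma small_power_bounds:
  fixes q :: real
  assumes "0 < q" "q \<le> 1 / 65536"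
  shows "q ^ 5 / 5 \<le> q / 2"
    and "q ^ 5 / 5 \<le> q ^ 4 - (q ^ 5 / 5) / q - 2 * q ^ 256"
    and "2 * q ^ 16 + (2 * q ^ 16) / q + 2 * q ^ 256 \<le> 6 * q ^ 15"
proof -
  have q1: "q \<le> 1" using assms by simp
  have "q ^ 5 \<le> q ^ 1" using assms q1 by (intro power_decreasing) auto
  then show "q ^ 5 / 5 \<le> q / 2" using assms by simp
  have "q ^ 4 * q \<le> q ^ 4 * (1 / 65536)" using assms by (intro mult_left_mono) auto
  moreover have "q ^ 256 \<le> q ^ 5" using assms q1 by (intro power_decreasing) auto
  moreover have "(q ^ 5 / 5) / q = q ^ 4 / 5" "q ^ 5 = q ^ 4 * q" using assms by (simp_all add: eval_nat_numeral)
  ultimately show "q ^ 5 / 5 \<le> q ^ 4 - (q ^ 5 / 5) / q - 2 * q ^ 256"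
    using zero_le_power[of q 4] assms by linarith
  have "(2 * q ^ 16) / q = 2 * q ^ 15" using assms by (simp add: eval_nat_numeral)
  moreover have "q ^ 16 \<le> q ^ 15" "q ^ 256 \<le> q ^ 15" using assms q1 by (intro power_decreasing; simp)+
  ultimately show "2 * q ^ 16 + (2 * q ^ 16) / q + 2 * q ^ 256 \<le> 6 * q ^ 15" by linarith
qed

lemma fine_chain_graph_spike_sum:
  assumes "u \<le> v" "0 < s"
  shows "fine_chain (graph_on {u..v} spike_sum) s (u, spike_sum u) (v, spike_sum v)"
proof (rule connected_imp_fine_chain)
  show "connected (graph_on {u..v} spike_sum)"
    unfolding graph_on_def by (intro connected_continuous_image continuous_on_graph_spike_sum) auto
qed (use assms in \<open>auto simp: graph_on_def\<close>)

lemma three_consecutive_centres: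
  assumes "0 \<le> \<alpha>" "4 * period k < \<beta> - \<alpha>" "\<beta> \<le> 1"
  obtains m where "\<alpha> < centre k m" "centre k (m + 2) < \<beta>" "m + 1 < teeth k"
proof
  let ?q = "period k" and ?m = "nat \<lceil>\<alpha> / period k\<rceil>"
  have q: "0 < ?q" by (rule period_pos)
  have "real ?m = of_int \<lceil>\<alpha> / ?q\<rceil>" using assms(1) q by simp
  then have "\<alpha> / ?q \<le> real ?m" "real ?m < \<alpha> / ?q + 1" by linarith+
  then have m: "\<alpha> \<le> real ?m * ?q" "real ?m * ?q < \<alpha> + ?q" using q by (simp_all add: field_simps)
  show "\<alpha> < centre k ?m" using m q by (simp add: centre_def algebra_simps)
  show c2: "centre k (?m + 2) < \<beta>" using m assms(2) by (simp add: centre_def algebra_simps)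
  have "real (?m + 1) * ?q < 1" using c2 assms(3) q by (simp add: centre_def algebra_simps)
  then have "real (?m + 1) < real (teeth k)" using q by (simp add: teeth_eq field_simps)
  then show "?m + 1 < teeth k" by (simp only: of_nat_less_iff)
qed

text \<open>Near the peak of a tooth of layer \<open>k\<close> the coarser layers are almost constant and the finer
  ones are tiny, so the graph rises by about \<open>height k\<close> over the tooth.\<close>
lemma spike_sum_rise_to_peak:
  assumes "m < teeth k" "halfwidth k \<le> \<bar>x - centre k m\<bar>" "\<bar>x - centre k m\<bar> \<le> period k / 2"
  shows "height k - \<bar>x - centre k m\<bar> / period k - 2 * height (Suc k) \<le> spike_sum (centre k m) - spike_sum x"
  using spike_sum_diff_layer[of "centre k m" x k] layer_centre[OF assms(1)] layer_off_centre[OF assms]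
  by (simp add: abs_minus_commute)

lemma spike_sum_across_tooth:
  assumes "m < teeth k"
  shows "\<bar>spike_sum (centre k m - halfwidth k) - spike_sum (centre k m + halfwidth k)\<bar>
           \<le> 2 * halfwidth k / period k + 2 * height (Suc k)"
proof -
  have "halfwidth k \<le> period k / 2" using halfwidth_le[of k] period_pos[of k] by simp
  then have "layer k (centre k m - halfwidth k) = 0" "layer k (centre k m + halfwidth k) = 0"
    using layer_off_centre[OF assms] halfwidth_pos[of k] by auto
  then show ?thesis
    using spike_sum_diff_layer[of "centre k m - halfwidth k" "centre k m + halfwidth k" k] halfwidth_pos[of k]
    by simp
qed

lemma dist_graph_from_peak_ge:
  assumes "m < teeth k" "halfwidth k \<le> \<bar>x - centre k m\<bar>"
  shows "period k ^ 5 / 5 \<le> dist (x, spike_sum x) (centre k m, spike_sum (centre k m))"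
proof (cases "period k ^ 5 / 5 \<le> \<bar>x - centre k m\<bar>")
  case True
  then show ?thesis
    using dist_fst_le[of "(x, spike_sum x)" "(centre k m, spike_sum (centre k m))"] by (simp add: dist_real_def)
next
  case False
  let ?q = "period k"
  note bounds = small_power_bounds[OF period_pos period_le, of k]
  have "\<bar>x - centre k m\<bar> / ?q \<le> (?q ^ 5 / 5) / ?q"
    using False period_pos[of k] by (intro divide_right_mono) auto
  moreover have "\<bar>x - centre k m\<bar> \<le> ?q / 2" using False bounds(1) by simp
  moreover have "height k = ?q ^ 4" "height (Suc k) = ?q ^ 256"
    by (simp_all add: height_eq period_Suc flip: power_mult)
  ultimately have "?q ^ 5 / 5 \<le> spike_sum (centre k m) - spike_sum x"
    using spike_sum_rise_to_peak[OF assms] bounds(2) by linarith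
  then show ?thesis
    using dist_snd_le[of "(x, spike_sum x)" "(centre k m, spike_sum (centre k m))"] by (simp add: dist_real_def)
qed

lemma dist_graph_across_tooth_le:
  assumes "m < teeth k"
  shows "dist (centre k m - halfwidth k, spike_sum (centre k m - halfwidth k))
    (centre k m + halfwidth k, spike_sum (centre k m + halfwidth k)) \<le> 6 * period k ^ 15"
proof -
  let ?c = "centre k m" and ?e = "halfwidth k" and ?q = "period k"
  have "height (Suc k) = ?q ^ 256" by (simp add: height_eq period_Suc flip: power_mult)
  then have "\<bar>spike_sum (?c - ?e) - spike_sum (?c + ?e)\<bar> \<le> 2 * ?q ^ 16 / ?q + 2 * ?q ^ 256"
    using spike_sum_across_tooth[OF assms] by (simp add: halfwidth_eq)
  then show ?thesis
    using norm_Pair_le[of "(?c - ?e) - (?c + ?e)" "spike_sum (?c - ?e) - spike_sum (?c + ?e)"]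
      small_power_bounds(3)[OF period_pos period_le, of k] halfwidth_pos[of k]
    by (simp add: dist_norm halfwidth_eq)
qed

text \<open>Three consecutive teeth of a fine layer \<open>k\<close>: the middle peak rises by \<open>period k ^ 4\<close> over a
  foot of width only \<open>2 * period k ^ 16\<close>, so with \<open>D = period k ^ 5 / 5\<close> and
  \<open>s = 6 * period k ^ 15\<close> we get \<open>2 c s \<le> D\<close> once \<open>period k \<le> 1 / (60 (c + 1))\<close>.\<close>
lemma spike_configuration:
  assumes "0 \<le> \<alpha>" "\<alpha> < \<beta>" "\<beta> \<le> 1" "0 < c"
  obtains a1 a2 e a3 D s where
    "\<alpha> < a1" "a1 \<le> a2 - e" "a2 + e \<le> a3" "a3 < \<beta>" "0 < e" "0 < D" "0 < s" "2 * c * s \<le> D"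
    "\<And>x. e \<le> \<bar>x - a2\<bar> \<Longrightarrow> D \<le> dist (x, spike_sum x) (a2, spike_sum a2)"
    "\<And>x. a2 \<le> x \<Longrightarrow> D \<le> dist (x, spike_sum x) (a1, spike_sum a1)"
    "\<And>x. x \<le> a2 \<Longrightarrow> D \<le> dist (x, spike_sum x) (a3, spike_sum a3)"
    "dist (a2 - e, spike_sum (a2 - e)) (a2 + e, spike_sum (a2 + e)) \<le> s"
proof -
  have "0 < min ((\<beta> - \<alpha>) / 4) (1 / (60 * (c + 1)))" using assms(2,4) by simp
  then obtain k where k: "period k < min ((\<beta> - \<alpha>) / 4) (1 / (60 * (c + 1)))"
    using period_tendsto_0 by blast
  define q where "q = period k"
  have q: "0 < q" "q \<le> 1 / 65536" "4 * q < \<beta> - \<alpha>"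
    using k period_pos[of k] period_le[of k] by (auto simp: q_def)
  obtain m where m: "\<alpha> < centre k m" "centre k (m + 2) < \<beta>" "m + 1 < teeth k"
    using three_consecutive_centres assms(1,3) q(3) unfolding q_def by blast
  define a2 where "a2 = centre k (m + 1)"
  have a: "centre k m = a2 - q" "centre k (m + 2) = a2 + q"
    by (simp_all add: a2_def centre_def q_def algebra_simps)
  define e where "e = halfwidth k"
  have e: "0 < e" "e \<le> q / 16"
    using halfwidth_pos[of k] halfwidth_le[of k] by (simp_all add: e_def q_def)
  have "q ^ 10 \<le> q ^ 1" using q by (intro power_decreasing) auto
  then have "12 * c * q ^ 10 \<le> 12 * c * (1 / (60 * (c + 1)))"
    using k assms(4) by (intro mult_left_mono) (auto simp: q_def)
  also have "\<dots> \<le> 1 / 5" using assms(4) by (simp add: field_simps)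
  finally have "q ^ 5 * (12 * c * q ^ 10) \<le> q ^ 5 * (1 / 5)"
    using q by (intro mult_left_mono) auto
  then have cs: "2 * c * (6 * q ^ 15) \<le> q ^ 5 / 5" by (simp add: mult_ac flip: power_add)
  have horizontal: "q ^ 5 / 5 \<le> dist (x, spike_sum x) (y, spike_sum y)" if "q \<le> \<bar>x - y\<bar>" for x y
    using that small_power_bounds(1)[OF q(1,2)] q(1) dist_fst_le[of "(x, spike_sum x)" "(y, spike_sum y)"]
    by (simp add: dist_real_def)
  show ?thesis
  proof (rule that[of "a2 - q" a2 e "a2 + q" "q ^ 5 / 5" "6 * q ^ 15"])
    show "\<alpha> < a2 - q" "a2 + q < \<beta>" "a2 - q \<le> a2 - e" "a2 + e \<le> a2 + q"
      using m(1,2) a e(2) q(1) by simp_all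
    show "0 < e" "0 < q ^ 5 / 5" "0 < 6 * q ^ 15" "2 * c * (6 * q ^ 15) \<le> q ^ 5 / 5"
      using e(1) q(1) cs by simp_all
    show "q ^ 5 / 5 \<le> dist (x, spike_sum x) (a2, spike_sum a2)" if "e \<le> \<bar>x - a2\<bar>" for x
      using dist_graph_from_peak_ge[OF m(3)] that unfolding a2_def e_def q_def by blast
    show "q ^ 5 / 5 \<le> dist (x, spike_sum x) (a2 - q, spike_sum (a2 - q))" if "a2 \<le> x" for x
      using that by (intro horizontal) simp
    show "q ^ 5 / 5 \<le> dist (x, spike_sum x) (a2 + q, spike_sum (a2 + q))" if "x \<le> a2" for x
      using that by (intro horizontal) simp
    show "dist (a2 - e, spike_sum (a2 - e)) (a2 + e, spike_sum (a2 + e)) \<le> 6 * q ^ 15"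
      using dist_graph_across_tooth_le[OF m(3)] unfolding a2_def e_def q_def .
  qed
qed

lemma three_points_separated_by_graph_chains:
  assumes "0 \<le> \<alpha>" "\<alpha> < \<beta>" "\<beta> \<le> 1" "0 < c"
  obtains P1 P2 P3 S1 S2 S3 D s where
    "0 < D" "0 \<le> s" "2 * c * s \<le> D"
    "fine_chain S1 s P2 P3" "fine_chain S2 s P1 P3" "fine_chain S3 s P1 P2"
    "S1 \<union> S2 \<union> S3 \<subseteq> graph_on {\<alpha>..\<beta>} spike_sum"
    "\<forall>X\<in>S1. D \<le> dist X P1" "\<forall>X\<in>S2. D \<le> dist X P2" "\<forall>X\<in>S3. D \<le> dist X P3"
proof -
  obtain a1 a2 e a3 D s where a: "\<alpha> < a1" "a1 \<le> a2 - e" "a2 + e \<le> a3" "a3 < \<beta>" "0 < e"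
    and Ds: "0 < D" "0 < s" "2 * c * s \<le> D"
    and far2: "\<And>x. e \<le> \<bar>x - a2\<bar> \<Longrightarrow> D \<le> dist (x, spike_sum x) (a2, spike_sum a2)"
    and far1: "\<And>x. a2 \<le> x \<Longrightarrow> D \<le> dist (x, spike_sum x) (a1, spike_sum a1)"
    and far3: "\<And>x. x \<le> a2 \<Longrightarrow> D \<le> dist (x, spike_sum x) (a3, spike_sum a3)"
    and gap: "dist (a2 - e, spike_sum (a2 - e)) (a2 + e, spike_sum (a2 + e)) \<le> s"
    using spike_configuration[OF assms] by blast
  let ?P = "\<lambda>x. (x, spike_sum x)"
  define S2 where "S2 = graph_on {a1..a2 - e} spike_sum \<union> graph_on {a2 + e..a3} spike_sum"
  have left: "fine_chain S2 s (?P a1) (?P (a2 - e))"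
    using fine_chain_graph_spike_sum[OF a(2) Ds(2)] by (rule fine_chain_mono) (auto simp: S2_def)
  have "?P (a2 - e) \<in> S2" "?P (a2 + e) \<in> S2" using a(2,3) by (auto simp: S2_def graph_on_def)
  then have across: "fine_chain S2 s (?P (a2 - e)) (?P (a2 + e))"
    using gap by (intro fine_chain_step[OF fine_chain_refl])
  have right: "fine_chain S2 s (?P (a2 + e)) (?P a3)"
    using fine_chain_graph_spike_sum[OF a(3) Ds(2)] by (rule fine_chain_mono) (auto simp: S2_def)
  have chain2: "fine_chain S2 s (?P a1) (?P a3)"
    by (rule fine_chain_trans[OF fine_chain_trans[OF left across] right])
  have chain1: "fine_chain (graph_on {a2..a3} spike_sum) s (?P a2) (?P a3)"
    and chain3: "fine_chain (graph_on {a1..a2} spike_sum) s (?P a1) (?P a2)"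
    using a Ds(2) by (simp_all add: fine_chain_graph_spike_sum)
  have sub: "graph_on {a2..a3} spike_sum \<union> S2 \<union> graph_on {a1..a2} spike_sum \<subseteq> graph_on {\<alpha>..\<beta>} spike_sum"
    using a by (auto simp: S2_def graph_on_def)
  have "\<forall>X\<in>S2. D \<le> dist X (?P a2)"
  proof
    fix X assume "X \<in> S2"
    then obtain x where "x \<in> {a1..a2 - e} \<union> {a2 + e..a3}" "X = ?P x" by (auto simp: S2_def graph_on_def)
    moreover from this(1) have "e \<le> \<bar>x - a2\<bar>" by (auto simp: abs_if)
    ultimately show "D \<le> dist X (?P a2)" using far2 by simp
  qed
  moreover have "\<forall>X\<in>graph_on {a2..a3} spike_sum. D \<le> dist X (?P a1)"
    "\<forall>X\<in>graph_on {a1..a2} spike_sum. D \<le> dist X (?P a3)"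
    using far1 far3 by (auto simp: graph_on_def)
  ultimately have far: "\<forall>X\<in>graph_on {a2..a3} spike_sum. D \<le> dist X (?P a1)"
    "\<forall>X\<in>S2. D \<le> dist X (?P a2)" "\<forall>X\<in>graph_on {a1..a2} spike_sum. D \<le> dist X (?P a3)"
    by blast+
  show ?thesis
    by (rule that[OF Ds(1) less_imp_le[OF Ds(2)] Ds(3) chain1 chain2 chain3 sub far])
qed

lemma graph_arc_not_in_closure_of_monotone:
  fixes A :: "(real \<times> real) set"
  assumes "monotone_order A R c" "0 \<le> \<alpha>" "\<alpha> < \<beta>" "\<beta> \<le> 1"
  shows "\<not> graph_on {\<alpha>..\<beta>} spike_sum \<subseteq> closure A"
proof
  interpret monotone_order A R c by (fact assms(1))
  assume arc: "graph_on {\<alpha>..\<beta>} spike_sum \<subseteq> closure A"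
  obtain P1 P2 P3 S1 S2 S3 D s where params: "0 < D" "0 \<le> s" "2 * c * s \<le> D"
    and chains: "fine_chain S1 s P2 P3" "fine_chain S2 s P1 P3" "fine_chain S3 s P1 P2"
    and sub: "S1 \<union> S2 \<union> S3 \<subseteq> graph_on {\<alpha>..\<beta>} spike_sum"
    and far: "\<forall>X\<in>S1. D \<le> dist X P1" "\<forall>X\<in>S2. D \<le> dist X P2" "\<forall>X\<in>S3. D \<le> dist X P3"
    by (rule three_points_separated_by_graph_chains[OF assms(2-4) c_pos])
  from sub arc have "S1 \<union> S2 \<union> S3 \<subseteq> closure A" by (rule order_trans)
  then show False by (rule no_three_points_separated_by_fine_chains[OF params chains _ far])
qed

text \<open>If the closure of \<open>A\<close> in the graph had an interior point, it would contain a whole arc of the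
  graph, which the previous lemma forbids.\<close>
theorem monotone_subset_nowhere_dense:
  assumes "A \<subseteq> graph_on {0..1} spike_sum" "monotone_space A"
  shows "nowhere_dense_in A (graph_on {0..1} spike_sum)"
  unfolding nowhere_dense_in_def
proof (rule ccontr)
  let ?G = "graph_on {0..1} spike_sum"
  assume "(subtopology euclidean ?G) interior_of ((subtopology euclidean ?G) closure_of A) \<noteq> {}"
  then obtain T g0 where T: "open T" "g0 \<in> T \<inter> ?G" "T \<inter> ?G \<subseteq> closure A"
    using closure_of_subtopology_subset[of euclidean ?G A]
    by (auto simp: interior_of_def openin_subtopology)
  then obtain x0 where x0: "x0 \<in> {0..1}" "g0 = (x0, spike_sum x0)" by (auto simp: graph_on_def)
  obtain \<rho> where \<rho>: "0 < \<rho>" "ball g0 \<rho> \<subseteq> T" using T(1,2) open_contains_ball by blast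
  obtain \<delta> where \<delta>: "0 < \<delta>" "\<And>x. dist x x0 < \<delta> \<Longrightarrow> dist (x, spike_sum x) g0 < \<rho>"
    using continuous_on_graph_spike_sum[of UNIV] \<open>0 < \<rho>\<close> x0(2) unfolding continuous_on_iff by blast
  define \<alpha> where "\<alpha> = max 0 (x0 - \<delta> / 2)"
  define \<beta> where "\<beta> = min 1 (x0 + \<delta> / 2)"
  have "0 \<le> \<alpha>" "\<alpha> < \<beta>" "\<beta> \<le> 1" using x0(1) \<open>0 < \<delta>\<close> by (auto simp: \<alpha>_def \<beta>_def)
  moreover have "graph_on {\<alpha>..\<beta>} spike_sum \<subseteq> closure A"
  proof
    fix P assume "P \<in> graph_on {\<alpha>..\<beta>} spike_sum"
    then obtain x where x: "x \<in> {\<alpha>..\<beta>}" "P = (x, spike_sum x)" by (auto simp: graph_on_def)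
    then have "dist x x0 < \<delta>" "x \<in> {0..1}" using \<open>0 < \<delta>\<close> by (auto simp: \<alpha>_def \<beta>_def dist_real_def)
    then have "P \<in> ball g0 \<rho>" "P \<in> graph_on {0..1} spike_sum"
      using \<delta> x(2) by (auto simp: graph_on_def dist_commute)
    then show "P \<in> closure A" using T(3) \<rho> by blast
  qed
  moreover obtain R c where "monotone_order A R c"
    using assms(2) unfolding monotone_space_def monotone_order_def by blast
  ultimately show False using graph_arc_not_in_closure_of_monotone by blast
qed

lemma closed_graph_spike_sum: "closed (graph_on {0..1} spike_sum)"
  unfolding graph_on_def
  by (intro compact_imp_closed compact_continuous_image continuous_on_graph_spike_sum) simp

lemma not_countable_union_of_nowhere_dense:
  fixes X :: "'a::complete_space set" and M :: "nat \<Rightarrow> 'a set"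
  assumes "closed X" "X \<noteq> {}" "\<And>n. M n \<subseteq> X" "\<And>n. nowhere_dense_in (M n) X"
  shows "X \<noteq> (\<Union>n. M n)"
proof
  let ?T = "subtopology euclidean X"
  assume X: "X = (\<Union>n. M n)"
  have "completely_metrizable_space ?T"
    using assms(1) by (intro completely_metrizable_space_closedin completely_metrizable_space_euclidean) simp
  then have "?T interior_of (\<Union>n. ?T closure_of M n) = {}"
    using assms(4) by (intro Baire_category_alt[where \<G> = "range (\<lambda>n. ?T closure_of M n)", simplified])
      (auto simp: nowhere_dense_in_def)
  moreover have "(\<Union>n. ?T closure_of M n) = X"
    using X assms(3) closure_of_subset[of "M _" ?T] closure_of_subset_topspace[of ?T] by fastforce
  ultimately show False using assms(2) interior_of_topspace[of ?T] by simp
qed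

theorem not_sigma_monotone_graph_spike_sum: "\<not> sigma_monotone (graph_on {0..1} spike_sum)"
proof
  assume "sigma_monotone (graph_on {0..1} spike_sum)"
  then obtain M :: "nat \<Rightarrow> (real \<times> real) set" where M: "\<And>n. monotone_space (M n)" "graph_on {0..1} spike_sum = (\<Union>n. M n)"
    unfolding sigma_monotone_def by blast
  moreover have "graph_on {0..1} spike_sum \<noteq> {}" by (simp add: graph_on_def)
  ultimately show False
    using not_countable_union_of_nowhere_dense[OF closed_graph_spike_sum] monotone_subset_nowhere_dense
    by (metis UN_upper UNIV_I)
qed

theorem theorem7p3:
  shows "\<exists>f :: real \<Rightarrow> real.
           abs_continuous_on 0 1 f \<and>
           strongly_porous (graph_on {0..1} f) \<and>
           (\<forall>A. A \<subseteq> graph_on {0..1} f \<and> monotone_space A \<longrightarrow>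
                nowhere_dense_in A (graph_on {0..1} f)) \<and>
           \<not> sigma_monotone (graph_on {0..1} f)"
  using abs_continuous_spike_sum strongly_porous_graph_spike_sum monotone_subset_nowhere_dense
    not_sigma_monotone_graph_spike_sum by blast

end
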